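(* Let $w$ be analytic on the open unit disk $D=\{|z|<1\}$ and suppose $w$ has a hard singularity at a point $z_1$ with $|z_1|=1$. Then the angular derivative $w^{\cdot}(z)=izw'(z)$ also has a hard singularity at $z_1$.
   Context: An inner analytic function is one analytic on the open unit disk centered at the origin; its angular derivative is $w^{\cdot}(z)=izw'(z)$. A singular point of $w$ on the unit circle is a point where $w$ fails to be analytic; a singularity at $z_1$ on the unit circle is soft if $\lim_{z\to z_1}w(z)$ (from within the open disk) exists and is finite, and hard otherwise. *)

theory Defs
  imports "HOL-Complex_Analysis.Complex_Analysis"
begin

definition ang_deriv :: "(complex \<Rightarrow> complex) \<Rightarrow> complex \<Rightarrow> complex" where
  "ang_deriv w z = \<i> * z * deriv w z"

definition analytic_at_from_disk :: "(complex \<Rightarrow> complex) \<Rightarrow> complex \<Rightarrow> bool" where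
  "analytic_at_from_disk w z1 \<longleftrightarrow>
     (\<exists>r>0. \<exists>g. g holomorphic_on ball z1 r \<and> (\<forall>z \<in> ball z1 r \<inter> ball 0 1. g z = w z))"

definition singular_point :: "(complex \<Rightarrow> complex) \<Rightarrow> complex \<Rightarrow> bool" where
  "singular_point w z1 \<longleftrightarrow> norm z1 = 1 \<and> \<not> analytic_at_from_disk w z1"

definition soft_singularity :: "(complex \<Rightarrow> complex) \<Rightarrow> complex \<Rightarrow> bool" where
  "soft_singularity w z1 \<longleftrightarrow> singular_point w z1 \<and> (\<exists>L. (w \<longlongrightarrow> L) (at z1 within ball 0 1))"

definition hard_singularity :: "(complex \<Rightarrow> complex) \<Rightarrow> complex \<Rightarrow> bool" where
  "hard_singularity w z1 \<longleftrightarrow> singular_point w z1 \<and> \<not> (\<exists>L. (w \<longlongrightarrow> L) (at z1 within ball 0 1))"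

end

theory Submission
  imports Defs
begin

text \<open>Analyticity at a boundary point transfers from \<open>i z w'(z)\<close> to \<open>w'\<close> because \<open>z1 \<noteq> 0\<close>,
  and from \<open>w'\<close> to \<open>w\<close> by taking a primitive on a ball around \<open>z1\<close>, which differs from \<open>w\<close>
  by a constant on the convex part of the ball inside the disk. If \<open>i z w'(z)\<close> had a limit
  at \<open>z1\<close>, then \<open>w'\<close> would be bounded near \<open>z1\<close>, so \<open>w\<close> would be Lipschitz, hence
  uniformly continuous, near \<open>z1\<close> and would have a limit there as well.\<close>

lemma analytic_at_from_disk_deriv_if_ang_deriv:
  assumes "analytic_at_from_disk (ang_deriv w) z1" and "z1 \<noteq> 0"
  shows "analytic_at_from_disk (deriv w) z1"
proof -
  obtain r g where "r > 0" and g: "g holomorphic_on ball z1 r"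
    and g_eq: "\<And>z. z \<in> ball z1 r \<inter> ball 0 1 \<Longrightarrow> g z = ang_deriv w z"
    using assms(1) unfolding analytic_at_from_disk_def by blast
  define r' where "r' = min r (norm z1)"
  have "r' > 0" using \<open>r > 0\<close> \<open>z1 \<noteq> 0\<close> by (simp add: r'_def)
  have sub: "ball z1 r' \<subseteq> ball z1 r" by (rule subset_ball) (simp add: r'_def)
  have nonzero: "z \<noteq> 0" if "z \<in> ball z1 r'" for z
    using that by (auto simp: r'_def dist_norm)
  have "(\<lambda>z. g z / (\<i> * z)) holomorphic_on ball z1 r'"
    using nonzero by (intro holomorphic_intros holomorphic_on_subset[OF g sub]) auto
  moreover have "g z / (\<i> * z) = deriv w z" if "z \<in> ball z1 r' \<inter> ball 0 1" for z
    using that sub nonzero[of z] g_eq[of z] by (auto simp: ang_deriv_def)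
  ultimately show ?thesis
    unfolding analytic_at_from_disk_def using \<open>r' > 0\<close> by blast
qed

lemma analytic_at_from_disk_if_deriv:
  assumes hol: "w holomorphic_on ball 0 1" and "analytic_at_from_disk (deriv w) z1"
  shows "analytic_at_from_disk w z1"
proof -
  obtain r g where "r > 0" and g: "g holomorphic_on ball z1 r"
    and g_eq: "\<And>z. z \<in> ball z1 r \<inter> ball 0 1 \<Longrightarrow> g z = deriv w z"
    using assms(2) unfolding analytic_at_from_disk_def by blast
  obtain F where F: "\<And>z. z \<in> ball z1 r \<Longrightarrow> (F has_field_derivative g z) (at z)"
    using holomorphic_convex_primitive'[OF convex_ball open_ball g]
    by (metis at_within_open open_ball)
  define U where "U = ball z1 r \<inter> ball 0 1"
  have "\<exists>c. \<forall>z\<in>U. w z - F z = c"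
  proof (rule has_field_derivative_zero_constant)
    show "convex U" unfolding U_def by (intro convex_Int convex_ball)
  next
    fix z assume z: "z \<in> U"
    have "(w has_field_derivative deriv w z) (at z)"
      using z by (intro holomorphic_derivI[OF hol open_ball]) (simp add: U_def)
    then have "((\<lambda>z. w z - F z) has_field_derivative 0) (at z)"
      using DERIV_diff[OF _ F] z g_eq[of z] by (fastforce simp: U_def)
    then show "((\<lambda>z. w z - F z) has_field_derivative 0) (at z within U)"
      by (rule has_field_derivative_at_within)
  qed
  then obtain c where "\<And>z. z \<in> U \<Longrightarrow> w z - F z = c" by blast
  then have c: "\<And>z. z \<in> U \<Longrightarrow> F z + c = w z" by (simp add: algebra_simps)
  have "F holomorphic_on ball z1 r"
    unfolding holomorphic_on_def field_differentiable_def
    using F has_field_derivative_at_within by blast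
  then have "(\<lambda>z. F z + c) holomorphic_on ball z1 r" by (intro holomorphic_intros)
  with c \<open>r > 0\<close> show ?thesis
    unfolding analytic_at_from_disk_def U_def by metis
qed

lemma tendsto_deriv_if_tendsto_ang_deriv:
  assumes "(ang_deriv w \<longlongrightarrow> L) (at z1 within S)" and "z1 \<noteq> 0"
  shows "(deriv w \<longlongrightarrow> L / (\<i> * z1)) (at z1 within S)"
proof -
  have "((\<lambda>z. ang_deriv w z / (\<i> * z)) \<longlongrightarrow> L / (\<i> * z1)) (at z1 within S)"
    using assms by (intro tendsto_intros) auto
  moreover have "\<forall>\<^sub>F z in at z1 within S. ang_deriv w z / (\<i> * z) = deriv w z"
    using eventually_neq_at_within[of 0 z1 S]
    by eventually_elim (simp add: ang_deriv_def)
  ultimately show ?thesis by (rule Lim_transform_eventually)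
qed

lemma deriv_bounded_near_if_tendsto:
  assumes "(deriv w \<longlongrightarrow> l) (at z1 within S)" and "z1 \<notin> S"
  obtains e where "e > 0" and "\<And>z. z \<in> S \<inter> ball z1 e \<Longrightarrow> norm (deriv w z) \<le> norm l + 1"
proof -
  have "\<forall>\<^sub>F z in at z1 within S. dist (deriv w z) l < 1"
    using assms(1) by (rule tendstoD) simp
  then obtain e where "e > 0"
    and close: "\<And>z. z \<in> S \<Longrightarrow> z \<noteq> z1 \<Longrightarrow> dist z z1 < e \<Longrightarrow> dist (deriv w z) l < 1"
    unfolding eventually_at by blast
  have "norm (deriv w z) \<le> norm l + 1" if "z \<in> S \<inter> ball z1 e" for z
  proof -
    have "dist (deriv w z) l < 1"
      using that assms(2) by (intro close) (auto simp: dist_commute)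
    then show ?thesis by norm
  qed
  with \<open>e > 0\<close> that show ?thesis by blast
qed

lemma tendsto_at_boundary_if_deriv_tendsto:
  assumes "convex S" and "open S" and hol: "w holomorphic_on S"
    and "z1 \<in> closure S" and "z1 \<notin> S"
    and "(deriv w \<longlongrightarrow> l) (at z1 within S)"
  shows "\<exists>L. (w \<longlongrightarrow> L) (at z1 within S)"
proof -
  obtain e where "e > 0" and bound: "\<And>z. z \<in> S \<inter> ball z1 e \<Longrightarrow> norm (deriv w z) \<le> norm l + 1"
    using deriv_bounded_near_if_tendsto[OF assms(6,5)] by blast
  define T where "T = S \<inter> ball z1 e"
  have "(norm l + 1)-lipschitz_on T w"
  proof (rule lipschitz_onI)
    fix x y assume "x \<in> T" "y \<in> T"
    show "dist (w x) (w y) \<le> (norm l + 1) * dist x y"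
      unfolding dist_norm
    proof (rule field_differentiable_bound[OF _ _ bound])
      show "convex T" unfolding T_def using \<open>convex S\<close> by (intro convex_Int convex_ball)
      fix z assume "z \<in> T"
      then show "(w has_field_derivative deriv w z) (at z within T)"
        using \<open>open S\<close> by (intro holomorphic_derivI[OF hol]) (auto simp: T_def)
    qed (use \<open>x \<in> T\<close> \<open>y \<in> T\<close> in \<open>auto simp: T_def\<close>)
  qed simp
  moreover have "z1 \<in> closure T"
    using open_Int_closure_subset[of "ball z1 e" S] \<open>e > 0\<close> \<open>z1 \<in> closure S\<close>
    by (auto simp: T_def Int_commute)
  ultimately obtain L where "(w \<longlongrightarrow> L) (at z1 within T)"
    using uniformly_continuous_on_extension_at_closure lipschitz_on_uniformly_continuous by metis
  moreover have "at z1 within S = at z1 within T"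
    unfolding T_def by (rule at_within_nhd[of _ "ball z1 e"]) (use \<open>e > 0\<close> in auto)
  ultimately show ?thesis by auto
qed

theorem mainTheorem9:
  fixes w :: "complex \<Rightarrow> complex" and z1 :: complex
  assumes "w holomorphic_on ball 0 1"
    and "hard_singularity w z1"
  shows "hard_singularity (ang_deriv w) z1"
proof -
  have "norm z1 = 1" and not_analytic: "\<not> analytic_at_from_disk w z1"
    and no_limit: "\<nexists>L. (w \<longlongrightarrow> L) (at z1 within ball 0 1)"
    using assms(2) by (auto simp: hard_singularity_def singular_point_def)
  then have "z1 \<noteq> 0" and "z1 \<in> closure (ball 0 1)" and "z1 \<notin> ball 0 1" by auto
  have "\<not> analytic_at_from_disk (ang_deriv w) z1"
    using analytic_at_from_disk_if_deriv[OF assms(1)]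
      analytic_at_from_disk_deriv_if_ang_deriv[OF _ \<open>z1 \<noteq> 0\<close>] not_analytic by blast
  moreover have "\<nexists>L. (ang_deriv w \<longlongrightarrow> L) (at z1 within ball 0 1)"
    using tendsto_at_boundary_if_deriv_tendsto[OF convex_ball open_ball assms(1)
        \<open>z1 \<in> closure (ball 0 1)\<close> \<open>z1 \<notin> ball 0 1\<close>]
      tendsto_deriv_if_tendsto_ang_deriv[OF _ \<open>z1 \<noteq> 0\<close>] no_limit by blast
  ultimately show ?thesis
    using \<open>norm z1 = 1\<close> by (simp add: hard_singularity_def singular_point_def)
qed

end
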